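(* Let $G$ be a graph containing a perfect matching $M$, and let $W$ be a shifted $M$-walk in $G$ with endpoints $a$ and $b$. Then $W$ contains a simple shifted $M$-walk $W'$ with endpoints $a$ and $b$.
   Context: Given a perfect matching $M$ in a graph $G$, a shifted $M$-walk with endpoints $a = v_1$ and $b = v_{2\ell}$ is a walk $v_1 v_2 \dots v_{2\ell}$ in $G$ such that $v_{2i}v_{2i+1} \in M$ for every $1 \leq i \leq \ell - 1$ and $v_{2i-1}v_{2i} \notin M$ for every $1 \leq i \leq \ell$. A shifted $M$-walk is simple if it contains each edge of $M$ at most twice. *)

theory Defs
  imports Main
begin

definition graph :: "'a set \<Rightarrow> 'a set set \<Rightarrow> bool" where
  "graph V E \<longleftrightarrow> finite V \<and> (\<forall>e\<in>E. e \<subseteq> V \<and> card e = 2)"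

definition perfect_matching :: "'a set \<Rightarrow> 'a set set \<Rightarrow> 'a set set \<Rightarrow> bool" where
  "perfect_matching V E M \<longleftrightarrow> M \<subseteq> E \<and> (\<forall>v\<in>V. \<exists>!e. e \<in> M \<and> v \<in> e)"

definition walk_edge :: "'a list \<Rightarrow> nat \<Rightarrow> 'a set" where
  "walk_edge W j = {W ! j, W ! Suc j}"

text \<open>Shifted M-walk v_1 ... v_{2l} (l \<ge> 1) with endpoints a, b. In 0-based indexing, the
  traversed edge number j (between positions j and j+1) must be in M for odd j and be an
  edge of G not in M for even j.\<close>
definition shifted_M_walk :: "'a set set \<Rightarrow> 'a set set \<Rightarrow> 'a list \<Rightarrow> 'a \<Rightarrow> 'a \<Rightarrow> bool" where
  "shifted_M_walk E M W a b \<longleftrightarrow>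
     W \<noteq> [] \<and> even (length W) \<and> hd W = a \<and> last W = b \<and>
     (\<forall>j. Suc j < length W \<longrightarrow> walk_edge W j \<in> E) \<and>
     (\<forall>j. Suc j < length W \<longrightarrow> (odd j \<longleftrightarrow> walk_edge W j \<in> M))"

definition edge_count :: "'a list \<Rightarrow> 'a set \<Rightarrow> nat" where
  "edge_count W e = card {j. Suc j < length W \<and> walk_edge W j = e}"

definition simple_walk :: "'a set set \<Rightarrow> 'a list \<Rightarrow> bool" where
  "simple_walk M W \<longleftrightarrow> (\<forall>e\<in>M. edge_count W e \<le> 2)"

definition walk_edges :: "'a list \<Rightarrow> 'a set set" where
  "walk_edges W = {walk_edge W j | j. Suc j < length W}"

end

theory Submission
  imports Defs
begin

text \<open>
  If an edge of \<open>M\<close> is traversed at least three times, two of these traversals leave from the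
  same endpoint (pigeonhole on the two endpoints), say at positions \<open>j < k\<close>. Both positions
  are odd, as edges of \<open>M\<close> only occur at odd positions, so the closed subwalk between them has
  even length. Cutting it out keeps the endpoints, only uses edges of the original walk and
  shifts later positions by an even amount, so the alternation pattern survives. Induction on
  the length of the walk finishes the argument.
\<close>

definition shortcut :: "'a list \<Rightarrow> nat \<Rightarrow> nat \<Rightarrow> 'a list" where
  "shortcut xs j k = take (Suc j) xs @ drop (Suc k) xs"

lemma length_shortcut:
  assumes "j < k" "k < length xs"
  shows "length (shortcut xs j k) = length xs - (k - j)"
  using assms by (simp add: shortcut_def)

lemma nth_shortcut:
  assumes "j < k" "Suc k < length xs" "xs ! j = xs ! k" "i < length (shortcut xs j k)"
  shows "shortcut xs j k ! i = xs ! (if i < j then i else i + (k - j))"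
proof (cases "i < Suc j")
  case True
  then show ?thesis using assms by (auto simp: shortcut_def nth_append less_Suc_eq)
next
  case False
  then have "shortcut xs j k ! i = xs ! (Suc k + (i - Suc j))"
    using assms by (simp add: shortcut_def nth_append)
  also have "Suc k + (i - Suc j) = i + (k - j)" using False assms(1) by simp
  finally show ?thesis using False by simp
qed

lemma walk_edge_shortcut:
  assumes "j < k" "Suc k < length xs" "xs ! j = xs ! k" "Suc i < length (shortcut xs j k)"
  shows "walk_edge (shortcut xs j k) i = walk_edge xs (if i < j then i else i + (k - j))"
proof -
  have "shortcut xs j k ! i = xs ! (if i < j then i else i + (k - j))"
    and "shortcut xs j k ! Suc i = xs ! (if Suc i < j then Suc i else Suc i + (k - j))"
    using assms by (simp_all only: nth_shortcut Suc_lessD)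
  then show ?thesis
    using assms(1,3) by (cases "Suc i = j") (auto simp: walk_edge_def)
qed

lemma hd_shortcut: "hd (shortcut xs j k) = hd xs"
  by (cases xs) (simp_all add: shortcut_def)

lemma last_shortcut: "Suc k < length xs \<Longrightarrow> last (shortcut xs j k) = last xs"
  by (simp add: shortcut_def last_drop)

lemma walk_edges_shortcut:
  assumes "j < k" "Suc k < length xs" "xs ! j = xs ! k"
  shows "walk_edges (shortcut xs j k) \<subseteq> walk_edges xs"
proof
  fix e assume "e \<in> walk_edges (shortcut xs j k)"
  then obtain i where i: "Suc i < length (shortcut xs j k)" "e = walk_edge (shortcut xs j k) i"
    by (auto simp: walk_edges_def)
  moreover have "Suc (if i < j then i else i + (k - j)) < length xs"
    using i(1) assms by (auto simp: length_shortcut)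
  ultimately show "e \<in> walk_edges xs"
    using assms by (auto simp: walk_edges_def walk_edge_shortcut)
qed

lemma shifted_M_walk_shortcut:
  assumes W: "shifted_M_walk E M W a b"
    and jk: "j < k" "Suc k < length W" "W ! j = W ! k" and parity: "even (k - j)"
  shows "shifted_M_walk E M (shortcut W j k) a b"
proof -
  let ?W' = "shortcut W j k" and ?pos = "\<lambda>i. if i < j then i else i + (k - j)"
  have len: "length ?W' = length W - (k - j)" using jk by (simp add: length_shortcut)
  have edge: "walk_edge ?W' i = walk_edge W (?pos i)" "Suc (?pos i) < length W"
    if "Suc i < length ?W'" for i
    using that jk len by (auto simp: walk_edge_shortcut)
  have "odd (?pos i) \<longleftrightarrow> odd i" for i using parity by auto
  moreover have "?W' \<noteq> []" "even (length ?W')"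
    using W jk len parity by (auto simp: shifted_M_walk_def)
  ultimately show ?thesis
    using W edge jk(2) by (simp add: shifted_M_walk_def hd_shortcut last_shortcut) metis
qed

lemma overused_edge_repeats_vertex:
  assumes "edge_count W e > 2"
  obtains j k where "j < k" "Suc k < length W" "walk_edge W j = e" "walk_edge W k = e"
    "W ! j = W ! k"
proof -
  define S where "S = {j. Suc j < length W \<and> walk_edge W j = e}"
  have "card S > 2" using assms by (simp add: S_def edge_count_def)
  then obtain j0 where "j0 \<in> S" by fastforce
  then have "(!) W ` S \<subseteq> {W ! j0, W ! Suc j0}"
    by (auto simp: S_def walk_edge_def)
  then have "card ((!) W ` S) \<le> card {W ! j0, W ! Suc j0}"
    by (intro card_mono) auto
  also have "\<dots> \<le> 2" by (simp add: card_insert_le_m1)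
  finally have "card ((!) W ` S) \<le> 2" .
  then have "\<not> inj_on ((!) W) S" using \<open>card S > 2\<close> card_image by fastforce
  then obtain j k where "j \<in> S" "k \<in> S" "j \<noteq> k" "W ! j = W ! k"
    by (auto simp: inj_on_def)
  then show ?thesis using that[of j k] that[of k j] by (auto simp: S_def linorder_neq_iff)
qed

lemma shifted_M_walk_matching_edge_odd:
  "shifted_M_walk E M W a b \<Longrightarrow> Suc j < length W \<Longrightarrow> walk_edge W j \<in> M \<Longrightarrow> odd j"
  by (simp add: shifted_M_walk_def)

lemma shifted_M_walk_simplify:
  "shifted_M_walk E M W a b \<Longrightarrow>
   \<exists>W'. shifted_M_walk E M W' a b \<and> simple_walk M W' \<and> walk_edges W' \<subseteq> walk_edges W"
proof (induction "length W" arbitrary: W rule: less_induct)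
  case less
  show ?case
  proof (cases "simple_walk M W")
    case True
    then show ?thesis using less.prems by blast
  next
    case False
    then obtain e where "e \<in> M" "edge_count W e > 2"
      by (auto simp: simple_walk_def not_le)
    then obtain j k where jk: "j < k" "Suc k < length W" "W ! j = W ! k"
      and "walk_edge W j \<in> M" "walk_edge W k \<in> M"
      by (metis overused_edge_repeats_vertex)
    moreover have "Suc j < length W" using jk by simp
    ultimately have "odd j" "odd k"
      using less.prems jk(2) by (metis shifted_M_walk_matching_edge_odd)+
    then have "shifted_M_walk E M (shortcut W j k) a b"
      using less.prems jk by (auto intro: shifted_M_walk_shortcut)
    moreover have "length (shortcut W j k) < length W"
      using jk by (simp add: length_shortcut)
    ultimately show ?thesis
      using less.hyps walk_edges_shortcut[OF jk] by blast
  qed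
qed

theorem lemma5p1:
  assumes "graph V E"
    and "perfect_matching V E M"
    and "shifted_M_walk E M W a b"
  shows "\<exists>W'. shifted_M_walk E M W' a b \<and> simple_walk M W' \<and> walk_edges W' \<subseteq> walk_edges W"
  using shifted_M_walk_simplify[OF assms(3)] .

end
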